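(* For every $t>0$, the operator $B(t)=W(1)\circ DH(v(\cdot;t))\circ W(t)$ acting on $X_1$ has the same eigenvalues as $\tilde A(t)$ acting on $X_t$: $\lambda$ is an eigenvalue of $B(t)$ (i.e. $B(t)[u]=\lambda u$ for some nonzero $u\in X_1$) if and only if $\lambda$ is an eigenvalue of $\tilde A(t)$ (i.e. $\tilde A(t)[w]=\lambda w$ for some nonzero $w\in X_t$).
   Context: Fix $n\ge2$, $d>0$. $Q(t)=\frac{1-t^{n-1}}{1-t^n}$ ($t\ne1$), $Q(1)=\frac{n-1}n$; for $0\le x\le1$, $R(x;t)=\frac{1}{|1-t|}\sqrt{\left(\frac{(1-(1-t)x)^{n-1}}{1-Q(t)+Q(t)(1-(1-t)x)^n}\right)^2-1}$ ($t\ne1$), $R(x;1)=\sqrt{(n-1)(1-x)x}$; $\zeta(x;t)=\int_x^1R(\tilde x;t)^{-1}d\tilde x$, $\zeta(1;t)=0$, $P(t)=\zeta(0;t)$, $\zeta^{-1}(\cdot;t)$ the inverse of $x\mapsto\zeta(x;t)$; $v(z;t)=\frac{d}{P(t)}\left(1-(1-t)\zeta^{-1}\left(\frac{P(t)z}{d};t\right)\right)$, $z\in[0,d]$. For positive $C^2$ $f$, $H(f)=\frac{-f_{zz}}{(1+f_z^2)^{3/2}}+\frac{n-1}{f\sqrt{1+f_z^2}}$ and $DH(f)[w]=\frac{d}{ds}\big|_{s=0}H(f+sw)$. Let $X_t=\{w\in C^2[0,d]:\int_0^dwv(\cdot;t)^{n-1}dz=0,\ w_z(0)=w_z(d)=0\}$,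 $W(t)[u]=u-\frac{\int_0^du\,v(z;t)^{n-1}dz}{\int_0^dv(z;t)^{n-1}dz}$ (the projection onto $X_t$), and $\tilde A(t)=W(t)\circ DH(v(\cdot;t))$ on $X_t$. *)

theory Defs
  imports "HOL-Analysis.Analysis"
begin

text \<open>Functions on [0,d] are represented as real => real; only their values on {0..d}
  matter, and derivatives are taken within {0..d} (one-sided at the endpoints).\<close>

definition Qf :: "nat \<Rightarrow> real \<Rightarrow> real" where
  "Qf n t = (if t = 1 then (real n - 1) / real n else (1 - t ^ (n - 1)) / (1 - t ^ n))"

definition Rf :: "nat \<Rightarrow> real \<Rightarrow> real \<Rightarrow> real" where
  "Rf n x t = (if t = 1 then sqrt ((real n - 1) * (1 - x) * x)
     else 1 / \<bar>1 - t\<bar> * sqrt (((1 - (1 - t) * x) ^ (n - 1)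
            / (1 - Qf n t + Qf n t * (1 - (1 - t) * x) ^ n)) ^ 2 - 1))"

definition zeta :: "nat \<Rightarrow> real \<Rightarrow> real \<Rightarrow> real" where
  "zeta n x t = integral {x..1} (\<lambda>y. 1 / Rf n y t)"

definition Pf :: "nat \<Rightarrow> real \<Rightarrow> real" where
  "Pf n t = zeta n 0 t"

definition zeta_inv :: "nat \<Rightarrow> real \<Rightarrow> real \<Rightarrow> real" where
  "zeta_inv n s t = (THE x. x \<in> {0..1} \<and> zeta n x t = s)"

definition vf :: "nat \<Rightarrow> real \<Rightarrow> real \<Rightarrow> real \<Rightarrow> real" where
  "vf n d z t = d / Pf n t * (1 - (1 - t) * zeta_inv n (Pf n t * z / d) t)"

definition D1 :: "real \<Rightarrow> (real \<Rightarrow> real) \<Rightarrow> real \<Rightarrow> real" where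
  "D1 d f z = vector_derivative f (at z within {0..d})"

definition C2_on :: "real \<Rightarrow> (real \<Rightarrow> real) \<Rightarrow> bool" where
  "C2_on d w \<longleftrightarrow>
     (\<forall>z\<in>{0..d}. (w has_vector_derivative D1 d w z) (at z within {0..d})) \<and>
     (\<forall>z\<in>{0..d}. (D1 d w has_vector_derivative D1 d (D1 d w) z) (at z within {0..d})) \<and>
     continuous_on {0..d} (D1 d (D1 d w))"

definition Hop :: "nat \<Rightarrow> real \<Rightarrow> (real \<Rightarrow> real) \<Rightarrow> real \<Rightarrow> real" where
  "Hop n d f z = - D1 d (D1 d f) z / (1 + (D1 d f z)\<^sup>2) powr (3/2)
      + (real n - 1) / (f z * sqrt (1 + (D1 d f z)\<^sup>2))"

definition DH :: "nat \<Rightarrow> real \<Rightarrow> (real \<Rightarrow> real) \<Rightarrow> (real \<Rightarrow> real) \<Rightarrow> real \<Rightarrow> real" where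
  "DH n d f w z = deriv (\<lambda>s. Hop n d (\<lambda>y. f y + s * w y) z) 0"

definition Xsp :: "nat \<Rightarrow> real \<Rightarrow> real \<Rightarrow> (real \<Rightarrow> real) set" where
  "Xsp n d t = {w. C2_on d w \<and> integral {0..d} (\<lambda>z. w z * vf n d z t ^ (n - 1)) = 0
                 \<and> D1 d w 0 = 0 \<and> D1 d w d = 0}"

definition Wproj :: "nat \<Rightarrow> real \<Rightarrow> real \<Rightarrow> (real \<Rightarrow> real) \<Rightarrow> real \<Rightarrow> real" where
  "Wproj n d t u z = u z - integral {0..d} (\<lambda>y. u y * vf n d y t ^ (n - 1))
                            / integral {0..d} (\<lambda>y. vf n d y t ^ (n - 1))"

definition Atilde :: "nat \<Rightarrow> real \<Rightarrow> real \<Rightarrow> (real \<Rightarrow> real) \<Rightarrow> real \<Rightarrow> real" where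
  "Atilde n d t w = Wproj n d t (DH n d (\<lambda>z. vf n d z t) w)"

definition Bop :: "nat \<Rightarrow> real \<Rightarrow> real \<Rightarrow> (real \<Rightarrow> real) \<Rightarrow> real \<Rightarrow> real" where
  "Bop n d t u = Wproj n d 1 (DH n d (\<lambda>z. vf n d z t) (Wproj n d t u))"

end

theory Submission
  imports Defs
begin

text \<open>Both W(1) and W(t) subtract a weighted mean, with the weights v(\<cdot>;s)^(n-1). Hence
  W(s) \<circ> W(t) = W(s) on continuous functions and W(t) is the identity on X_t, so u \<mapsto> W(t) u and
  w \<mapsto> W(1) w are mutually inverse bijections X_1 \<leftrightarrow> X_t. They carry eigenvectors to eigenvectors,
  because W(s) g = \<lambda> W(s) x says that g - \<lambda> x is constant, and every W(t) annihilates constants.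

  The analytic content is that the weights are admissible: v(\<cdot>;t) is continuous and positive, so
  the weight has positive integral. This rests on \<zeta>(\<cdot>;t) being a continuous, strictly decreasing
  bijection [0,1] \<rightarrow> [0,P(t)], which holds because R(x;t) \<ge> c sqrt(x(1-x)) makes 1/R integrable.\<close>

lemma unimodal_quadratic_lower_bound:
  fixes h :: "real \<Rightarrow> real"
  assumes order: "a < m1" "m1 \<le> c" "c \<le> m2" "m2 < b" and \<delta>: "\<delta> > 0"
    and incr: "\<And>x y. m1 \<le> x \<Longrightarrow> x \<le> y \<Longrightarrow> y \<le> c \<Longrightarrow> h x \<le> h y"
    and decr: "\<And>x y. c \<le> x \<Longrightarrow> x \<le> y \<Longrightarrow> y \<le> m2 \<Longrightarrow> h y \<le> h x"
    and left: "\<And>y. a \<le> y \<Longrightarrow> y \<le> m1 \<Longrightarrow> \<delta> * (y - a) \<le> h y"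
    and right: "\<And>y. m2 \<le> y \<Longrightarrow> y \<le> b \<Longrightarrow> \<delta> * (b - y) \<le> h y"
  shows "\<exists>e>0. \<forall>y\<in>{a..b}. e * ((y - a) * (b - y)) \<le> h y"
proof -
  define L where "L = b - a"
  define \<eta> where "\<eta> = \<delta> * min (m1 - a) (b - m2)"
  have L: "L > 0" and \<eta>: "\<eta> > 0" using order \<delta> by (auto simp: L_def \<eta>_def)
  define e where "e = min (\<delta> / L) (\<eta> / L\<^sup>2)"
  have "e * ((y - a) * (b - y)) \<le> h y" if y: "a \<le> y" "y \<le> b" for y
  proof -
    have ya: "(y - a) * (b - y) \<le> L * (y - a)"
      using y by (simp add: L_def mult.commute[of "y - a"] mult_right_mono)
    have yb: "(y - a) * (b - y) \<le> L * (b - y)"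
      using y by (simp add: L_def mult_right_mono)
    have yL: "(y - a) * (b - y) \<le> L\<^sup>2"
    proof -
      have "L * (y - a) \<le> L * L" using L y by (intro mult_left_mono) (auto simp: L_def)
      with ya show ?thesis by (simp add: power2_eq_square)
    qed
    have p0: "0 \<le> (y - a) * (b - y)" using y by simp
    consider "y \<le> m1" | "m1 \<le> y" "y \<le> m2" | "m2 \<le> y" by linarith
    then show ?thesis
    proof cases
      case 1
      have "e * ((y - a) * (b - y)) \<le> \<delta> / L * (L * (y - a))"
        using p0 L \<delta> by (intro mult_mono[OF _ ya]) (auto simp: e_def)
      also have "\<dots> \<le> h y" using left[of y] y 1 L by simp
      finally show ?thesis .
    next
      case 2
      have "\<eta> \<le> h y"
      proof (cases "y \<le> c")
        case True
        have "\<eta> \<le> \<delta> * (m1 - a)" using \<delta> by (simp add: \<eta>_def)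
        also have "\<dots> \<le> h m1" using left[of m1] order by simp
        also have "\<dots> \<le> h y" using incr[of m1 y] 2 True by simp
        finally show ?thesis .
      next
        case False
        have "\<eta> \<le> \<delta> * (b - m2)" using \<delta> by (simp add: \<eta>_def)
        also have "\<dots> \<le> h m2" using right[of m2] order by simp
        also have "\<dots> \<le> h y" using decr[of y m2] 2 False by simp
        finally show ?thesis .
      qed
      moreover have "e * ((y - a) * (b - y)) \<le> \<eta> / L\<^sup>2 * L\<^sup>2"
        using p0 \<eta> by (intro mult_mono[OF _ yL]) (auto simp: e_def)
      ultimately show ?thesis using L by simp
    next
      case 3
      have "e * ((y - a) * (b - y)) \<le> \<delta> / L * (L * (b - y))"
        using p0 L \<delta> by (intro mult_mono[OF _ yb]) (auto simp: e_def)
      also have "\<dots> \<le> h y" using right[of y] y 3 L by simp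
      finally show ?thesis .
    qed
  qed
  moreover have "e > 0" using L \<delta> \<eta> by (simp add: e_def)
  ultimately show ?thesis by auto
qed

lemma trinomial_lower_bound_between_roots:
  fixes m :: nat and Q a b :: real
  defines "h \<equiv> \<lambda>y. y ^ m - Q * y ^ Suc m - (1 - Q)"
  assumes m: "m \<ge> 1" and Q: "0 < Q" "Q < 1" and ab: "0 < a" "a < b"
    and roots: "h a = 0" "h b = 0"
  shows "\<exists>e>0. \<forall>y\<in>{a..b}. e * ((y - a) * (b - y)) \<le> h y"
proof -
  define \<kappa> where "\<kappa> = Q * (real m + 1)"
  define c where "c = real m / \<kappa>"
  have \<kappa>: "\<kappa> > 0" using Q by (simp add: \<kappa>_def)
  define h' where "h' = (\<lambda>y::real. \<kappa> * y ^ (m - 1) * (c - y))"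
  have der: "(h has_real_derivative h' y) (at y)" for y
  proof -
    have pow: "y ^ (m - 1) * y = y ^ m" using m by (metis Suc_diff_le diff_Suc_1 power_Suc2)
    have "(h has_real_derivative real m * y ^ (m - 1) - Q * (real (Suc m) * y ^ m)) (at y)"
      unfolding h_def using pow by (auto intro!: derivative_eq_intros simp: algebra_simps)
    moreover have "h' y = real m * y ^ (m - 1) - Q * (real (Suc m) * y ^ m)"
    proof -
      have "h' y = (\<kappa> * c) * y ^ (m - 1) - \<kappa> * (y ^ (m - 1) * y)"
        by (simp add: h'_def algebra_simps)
      also have "\<dots> = real m * y ^ (m - 1) - \<kappa> * y ^ m"
        using \<kappa> by (simp only: pow) (simp add: c_def)
      finally show ?thesis by (simp add: \<kappa>_def)
    qed
    ultimately show ?thesis by simp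
  qed
  have cont: "continuous_on A h" for A
    using der by (meson DERIV_isCont continuous_at_imp_continuous_on)
  have c: "a < c" "c < b"
  proof -
    obtain z where z: "a < z" "z < b" "(h has_real_derivative 0) (at z)"
      using Rolle[OF ab(2) _ cont] roots der real_differentiable_def by force
    have "h' z = 0" using DERIV_unique[OF der z(3)] .
    hence "z = c" using \<kappa> z ab by (simp add: h'_def)
    thus "a < c" "c < b" using z by auto
  qed
  have h'_nonneg: "0 \<le> h' y" if "0 \<le> y" "y \<le> c" for y
    using that \<kappa> by (simp add: h'_def)
  have h'_nonpos: "h' y \<le> 0" if "0 \<le> y" "c \<le> y" for y
    using that \<kappa> by (simp add: h'_def mult_nonneg_nonpos)
  define m1 where "m1 = (a + c) / 2"
  define m2 where "m2 = (c + b) / 2"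
  have m12: "a < m1" "m1 < c" "c < m2" "m2 < b" using c by (auto simp: m1_def m2_def)
  define \<delta> where "\<delta> = \<kappa> * a ^ (m - 1) * min (c - m1) (m2 - c)"
  have \<delta>: "\<delta> > 0" using \<kappa> ab c by (simp add: \<delta>_def m1_def m2_def)
  have slope: "\<delta> \<le> \<kappa> * y ^ (m - 1) * \<bar>c - y\<bar>" if "a \<le> y" "y \<le> m1 \<or> m2 \<le> y" for y
  proof -
    have "a ^ (m - 1) \<le> y ^ (m - 1)" using that ab by (intro power_mono) auto
    moreover have "min (c - m1) (m2 - c) \<le> \<bar>c - y\<bar>"
      using that c unfolding m1_def m2_def by (auto simp: min_def abs_if field_simps)
    moreover have "0 < y" using that ab by simp
    ultimately show ?thesis
      unfolding \<delta>_def using \<kappa> m12 by (intro mult_mono mult_left_mono) auto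
  qed
  show ?thesis
  proof (rule unimodal_quadratic_lower_bound[OF _ _ _ _ \<delta>])
    show "a < m1" "m1 \<le> c" "c \<le> m2" "m2 < b" using m12 by auto
  next
    fix x y assume "m1 \<le> x" "x \<le> y" "y \<le> c"
    then show "h x \<le> h y"
      using m12 ab by (intro deriv_nonneg_imp_mono[OF der h'_nonneg]) auto
  next
    fix x y assume xy: "c \<le> x" "x \<le> y" "y \<le> m2"
    show "h y \<le> h x"
    proof (rule DERIV_nonpos_imp_nonincreasing[OF xy(2)])
      fix z assume "x \<le> z" "z \<le> y"
      then have "h' z \<le> 0" using xy c ab by (intro h'_nonpos) auto
      then show "\<exists>d. (h has_real_derivative d) (at z) \<and> d \<le> 0" using der by blast
    qed
  next
    fix y assume y: "a \<le> y" "y \<le> m1"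
    have "h a - \<delta> * (a - a) \<le> h y - \<delta> * (y - a)"
    proof (rule deriv_nonneg_imp_mono[where g = "\<lambda>y. h y - \<delta> * (y - a)" and g' = "\<lambda>y. h' y - \<delta>"])
      fix x assume x: "x \<in> {a..y}"
      show "((\<lambda>y. h y - \<delta> * (y - a)) has_real_derivative h' x - \<delta>) (at x)"
        by (auto intro!: derivative_eq_intros der)
      have "x \<le> c" using x y m12 by auto
      then show "0 \<le> h' x - \<delta>" using slope[of x] x y by (auto simp: h'_def)
    qed (use y in auto)
    then show "\<delta> * (y - a) \<le> h y" using roots by simp
  next
    fix y assume y: "m2 \<le> y" "y \<le> b"
    have "h y - \<delta> * (b - y) \<ge> h b - \<delta> * (b - b)"
    proof (rule DERIV_nonpos_imp_nonincreasing[where f = "\<lambda>y. h y - \<delta> * (b - y)"])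
      fix x assume x: "y \<le> x" "x \<le> b"
      have "c \<le> x" using x y m12 by auto
      then have "\<delta> \<le> \<kappa> * x ^ (m - 1) * (x - c)" using slope[of x] x y m12 by auto
      moreover have "h' x = - (\<kappa> * x ^ (m - 1) * (x - c))" by (simp add: h'_def algebra_simps)
      ultimately have "h' x + \<delta> \<le> 0" by linarith
      moreover have "((\<lambda>y. h y - \<delta> * (b - y)) has_real_derivative h' x + \<delta>) (at x)"
        by (auto intro!: derivative_eq_intros der)
      ultimately show "\<exists>d. ((\<lambda>y. h y - \<delta> * (b - y)) has_real_derivative d) (at x) \<and> d \<le> 0"
        by blast
    qed (use y in auto)
    then show "\<delta> * (b - y) \<le> h y" using roots by simp
  qed
qed

lemma Qf_bounds:
  assumes n: "n \<ge> 2" and t: "t > 0" "t \<noteq> 1"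
  shows "0 < Qf n t" "Qf n t < 1"
proof -
  obtain m where m: "n = Suc m" "m \<ge> 1" using n by (cases n) auto
  define s where "s = t ^ m"
  have Q: "Qf n t = (1 - s) / (1 - t * s)" using t m by (simp add: Qf_def s_def)
  have "0 < 1 - s \<and> 1 - s < 1 - t * s \<or> 1 - t * s < 1 - s \<and> 1 - s < 0"
  proof (cases "t < 1")
    case True
    then have "s < 1" using t m by (simp add: s_def power_less_one_iff)
    moreover have "t * s < s" using True t by (simp add: s_def)
    ultimately show ?thesis by simp
  next
    case False
    then have "1 < s" using t m by (simp add: s_def)
    moreover have "s < t * s" using False t \<open>1 < s\<close> by simp
    ultimately show ?thesis by (intro disjI2) linarith
  qed
  moreover have "0 < x / y \<and> x / y < 1" if "0 < x \<and> x < y \<or> y < x \<and> x < 0" for x y :: real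
    using that by (auto simp: divide_less_eq_1 zero_less_divide_iff)
  ultimately show "0 < Qf n t" "Qf n t < 1" unfolding Q by blast+
qed

lemma Qf_root:
  assumes n: "n \<ge> 2" and t: "t > 0" "t \<noteq> 1"
  shows "t ^ (n - 1) - Qf n t * t ^ n - (1 - Qf n t) = 0"
proof -
  obtain m where m: "n = Suc m" using n by (cases n) auto
  have "1 - t ^ n \<noteq> 0"
    using power_eq_iff_eq_base[of n t 1] n t by auto
  then show ?thesis using t by (simp add: Qf_def m field_simps)
qed

lemma affine_path_between:
  fixes t x :: real
  assumes "x \<in> {0..1}"
  shows "1 - (1 - t) * x \<in> {min t 1..max t 1}"
  using assms mult_right_mono[of t 1 x] mult_right_mono[of 1 t x]
    mult_nonneg_nonneg[of "1 - t" "1 - x"] mult_nonneg_nonneg[of "t - 1" "1 - x"]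
  by (cases "t \<le> 1") (auto simp: algebra_simps)

lemma affine_path_gap:
  fixes t x :: real
  shows "(1 - (1 - t) * x - min t 1) * (max t 1 - (1 - (1 - t) * x)) = (1 - t)\<^sup>2 * (x * (1 - x))"
  by (cases "t \<le> 1") (auto simp: power2_eq_square algebra_simps)

lemma sqrt_le_sqrt_power2_minus_one:
  fixes s g :: real
  assumes "0 \<le> s" "s \<le> g - 1"
  shows "sqrt s \<le> sqrt (g\<^sup>2 - 1)"
proof -
  have "g \<le> g * g" using assms mult_left_mono[of 1 g g] by simp
  then have "s \<le> g\<^sup>2 - 1" using assms(2) by (simp add: power2_eq_square)
  then show ?thesis by simp
qed

lemma Rf_lower_bound_ne1:
  assumes n: "n \<ge> 2" and t: "t > 0" "t \<noteq> 1"
  shows "\<exists>c>0. \<forall>x\<in>{0..1}. c * sqrt (x * (1 - x)) \<le> Rf n x t"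
proof -
  obtain m where m: "n = Suc m" "m \<ge> 1" using n by (cases n) auto
  define Q where "Q = Qf n t"
  have Q: "0 < Q" "Q < 1" using Qf_bounds[OF n t] by (simp_all add: Q_def)
  define a where "a = min t 1"
  define b where "b = max t 1"
  have ab: "0 < a" "a < b" using t by (auto simp: a_def b_def)
  define D where "D = (\<lambda>y::real. 1 - Q + Q * y ^ Suc m)"
  \<comment> \<open>With y = 1 - (1-t)x, R(x;t) = sqrt((y^m/D y)^2 - 1)/|1-t|, and y^m - D y is a trinomial
    vanishing at y = 1 and, by the choice of Q, at y = t.\<close>
  have roots: "y ^ m - Q * y ^ Suc m - (1 - Q) = 0" if "y = t \<or> y = 1" for y
    using that Qf_root[OF n t] by (auto simp: m Q_def)
  obtain e where e: "e > 0" and gap: "\<forall>y\<in>{a..b}. e * ((y - a) * (b - y)) \<le> y ^ m - D y"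
    using trinomial_lower_bound_between_roots[OF m(2) Q ab] roots[of a] roots[of b]
    by (auto simp: a_def b_def min_def max_def D_def algebra_simps)
  have D_pos: "0 < D y" if "0 \<le> y" for y
    using Q that by (simp add: D_def add_pos_nonneg)
  have D_le: "D y \<le> D b" if "0 \<le> y" "y \<le> b" for y
  proof -
    have "y ^ Suc m \<le> b ^ Suc m" using that by (intro power_mono) auto
    then show ?thesis using Q unfolding D_def by (smt (verit) mult_left_mono)
  qed
  define c where "c = sqrt (e / D b)"
  have "c * sqrt (x * (1 - x)) \<le> Rf n x t" if x: "x \<in> {0..1}" for x
  proof -
    define y where "y = 1 - (1 - t) * x"
    have y: "a \<le> y" "y \<le> b" using affine_path_between[OF x, of t] by (simp_all add: y_def a_def b_def)
    define g where "g = y ^ m / D y"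
    define s where "s = e / D b * (1 - t)\<^sup>2 * (x * (1 - x))"
    have s_nonneg: "0 \<le> s" using e D_pos[of b] ab x by (simp add: s_def)
    have "(y - a) * (b - y) = (1 - t)\<^sup>2 * (x * (1 - x))"
      unfolding y_def a_def b_def by (rule affine_path_gap)
    then have "s = e * ((y - a) * (b - y)) / D b" by (simp add: s_def)
    also have "\<dots> \<le> e * ((y - a) * (b - y)) / D y"
      using e y ab D_pos[of y] D_pos[of b] D_le[of y] by (intro divide_left_mono) auto
    also have "\<dots> \<le> (y ^ m - D y) / D y"
      using gap y D_pos[of y] ab by (intro divide_right_mono) auto
    also have "\<dots> = g - 1" using D_pos[of y] y ab by (simp add: g_def field_simps)
    finally have "s \<le> g - 1" .
    have "sqrt s = c * \<bar>1 - t\<bar> * sqrt (x * (1 - x))"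
      by (simp only: s_def c_def real_sqrt_mult real_sqrt_abs[symmetric])
    then have "c * sqrt (x * (1 - x)) = sqrt s / \<bar>1 - t\<bar>" using t by simp
    also have "\<dots> \<le> sqrt (g\<^sup>2 - 1) / \<bar>1 - t\<bar>"
      using sqrt_le_sqrt_power2_minus_one[OF s_nonneg \<open>s \<le> g - 1\<close>] by (simp add: divide_right_mono)
    also have "\<dots> = Rf n x t"
      using t by (simp add: Rf_def g_def y_def D_def Q_def m)
    finally show ?thesis .
  qed
  moreover have "c > 0" using e D_pos[of b] ab by (simp add: c_def)
  ultimately show ?thesis by blast
qed

lemma Rf_continuous_on:
  assumes n: "n \<ge> 2" and t: "t > 0"
  shows "continuous_on {0..1} (\<lambda>x. Rf n x t)"
proof (cases "t = 1")
  case True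
  then show ?thesis by (simp add: Rf_def) (intro continuous_intros)
next
  case False
  have Q: "0 < Qf n t" "Qf n t < 1" using Qf_bounds[OF n t False] by auto
  have "1 - Qf n t + Qf n t * (1 - (1 - t) * x) ^ n \<noteq> 0" if "x \<in> {0..1}" for x
  proof -
    have "0 \<le> 1 - (1 - t) * x" using affine_path_between[OF that, of t] t by auto
    then show ?thesis using Q by (smt (verit) mult_nonneg_nonneg zero_le_power)
  qed
  then show ?thesis using False by (auto simp: Rf_def intro!: continuous_intros)
qed

lemma Rf_lower_bound:
  assumes n: "n \<ge> 2" and t: "t > 0"
  shows "\<exists>c>0. \<forall>x\<in>{0..1}. c * sqrt (x * (1 - x)) \<le> Rf n x t"
proof (cases "t = 1")
  case True
  have "Rf n x t = sqrt (real n - 1) * sqrt (x * (1 - x))" for x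
    using True by (simp add: Rf_def real_sqrt_mult[symmetric] algebra_simps)
  moreover have "sqrt (real n - 1) > 0" using n by simp
  ultimately show ?thesis by (intro exI[of _ "sqrt (real n - 1)"]) auto
next
  case False
  then show ?thesis using Rf_lower_bound_ne1[OF n t] by blast
qed

lemma integrable_inverse_sqrt_x_one_minus_x: "(\<lambda>x::real. 1 / sqrt (x * (1 - x))) integrable_on {0..1}"
proof -
  have "((\<lambda>x::real. 1 / sqrt (x * (1 - x))) has_integral
        (arcsin (2 * 1 - 1) - arcsin (2 * 0 - 1))) {0..1}"
  proof (rule fundamental_theorem_of_calculus_interior)
    show "continuous_on {0..1} (\<lambda>x::real. arcsin (2 * x - 1))"
      by (intro continuous_intros) auto
  next
    fix x :: real assume x: "x \<in> {0<..<1}"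
    have d: "((\<lambda>x. arcsin (2 * x - 1)) has_real_derivative
          inverse (sqrt (1 - (2 * x - 1)\<^sup>2)) * 2) (at x)"
      using x by (auto intro!: derivative_eq_intros DERIV_arcsin[THEN DERIV_chain2])
    have "1 - (2 * x - 1)\<^sup>2 = 2\<^sup>2 * (x * (1 - x))" by (simp add: power2_eq_square algebra_simps)
    then have "sqrt (1 - (2 * x - 1)\<^sup>2) = 2 * sqrt (x * (1 - x))"
      by (simp only: real_sqrt_mult real_sqrt_abs)
    then show "((\<lambda>x. arcsin (2 * x - 1)) has_vector_derivative 1 / sqrt (x * (1 - x))) (at x)"
      using d by (simp add: has_real_derivative_iff_has_vector_derivative field_simps)
  qed simp
  then show ?thesis by blast
qed

lemma integrable_inverse_of_sqrt_lower_bound: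
  fixes R :: "real \<Rightarrow> real"
  assumes cR: "continuous_on {0..1} R" and c: "c > 0"
    and lb: "\<forall>x\<in>{0..1}. c * sqrt (x * (1 - x)) \<le> R x"
  shows "(\<lambda>x. 1 / R x) integrable_on {0..1}"
proof -
  have R_pos: "0 < c * sqrt (x * (1 - x))" "c * sqrt (x * (1 - x)) \<le> R x" if "x \<in> {0<..<1}" for x
    using that c lb by auto
  have "(\<lambda>x. 1 / R x) integrable_on {0<..<1}"
  proof (rule measurable_bounded_by_integrable_imp_integrable_real)
    have "continuous_on {0<..<1} (\<lambda>x. 1 / R x)"
      using R_pos by (intro continuous_intros continuous_on_subset[OF cR]) force+
    then show "(\<lambda>x. 1 / R x) \<in> borel_measurable (lebesgue_on {0<..<1})"
      by (rule continuous_imp_measurable_on_sets_lebesgue) simp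
    show "(\<lambda>x. 1 / c * (1 / sqrt (x * (1 - x)))) integrable_on {0<..<1}"
      using integrable_on_cmult_left[OF integrable_inverse_sqrt_x_one_minus_x, of "1 / c"]
      by (simp add: integrable_on_open_interval_real)
    fix x :: real assume x: "x \<in> {0<..<1}"
    then have "\<bar>1 / R x\<bar> \<le> 1 / (c * sqrt (x * (1 - x)))"
      using R_pos[OF x] by (simp add: frac_le)
    then show "\<bar>1 / R x\<bar> \<le> 1 / c * (1 / sqrt (x * (1 - x)))" by simp
  qed simp
  then show ?thesis using integrable_on_open_interval_real by blast
qed

lemma tail_integral_strict_decreasing:
  fixes f :: "real \<Rightarrow> real"
  assumes f: "f integrable_on {a..b}" and k: "k > 0" and f_ge: "\<And>x. x \<in> {a<..<b} \<Longrightarrow> k \<le> f x"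
    and x: "a \<le> x" "x < x'" "x' \<le> b"
  shows "integral {x'..b} f < integral {x..b} f"
proof -
  have "k * (x' - x) = integral {x<..<x'} (\<lambda>_. k)"
    using x by (simp flip: integral_open_interval_real)
  also have "\<dots> \<le> integral {x<..<x'} f"
    using integrable_subinterval_real[OF f, of x x'] x f_ge
    by (intro integral_le) (auto simp: integrable_on_open_interval_real)
  also have "\<dots> = integral {x..x'} f" by (simp add: integral_open_interval_real)
  finally have "0 < integral {x..x'} f" using k x by (smt (verit) mult_pos_pos)
  moreover have "integral {x..x'} f + integral {x'..b} f = integral {x..b} f"
    using x by (intro Henstock_Kurzweil_Integration.integral_combine integrable_subinterval_real[OF f]) auto
  ultimately show ?thesis by linarith
qed

lemma integrable_inverse_Rf:
  assumes "n \<ge> 2" "t > 0"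
  shows "(\<lambda>x. 1 / Rf n x t) integrable_on {0..1}"
proof -
  obtain c where "c > 0" "\<forall>x\<in>{0..1}. c * sqrt (x * (1 - x)) \<le> Rf n x t"
    using Rf_lower_bound[OF assms] by blast
  then show ?thesis by (rule integrable_inverse_of_sqrt_lower_bound[OF Rf_continuous_on[OF assms]])
qed

lemma zeta_continuous_on:
  assumes "n \<ge> 2" "t > 0"
  shows "continuous_on {0..1} (\<lambda>x. zeta n x t)"
  unfolding zeta_def by (rule indefinite_integral_continuous_1'[OF integrable_inverse_Rf[OF assms]])

lemma zeta_strict_decreasing:
  assumes n: "n \<ge> 2" and t: "t > 0" and x: "0 \<le> x" "x < x'" "x' \<le> 1"
  shows "zeta n x' t < zeta n x t"
proof -
  obtain c where c: "c > 0" "\<forall>x\<in>{0..1}. c * sqrt (x * (1 - x)) \<le> Rf n x t"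
    using Rf_lower_bound[OF n t] by blast
  obtain M where M: "\<forall>x\<in>{0..1}. Rf n x t \<le> M"
    using continuous_attains_sup[OF compact_Icc _ Rf_continuous_on[OF n t]] by fastforce
  have lower: "1 / max M 1 \<le> 1 / Rf n y t" if "y \<in> {0<..<1}" for y
  proof -
    have "0 < c * sqrt (y * (1 - y))" using that c by simp
    moreover have "c * sqrt (y * (1 - y)) \<le> Rf n y t" using c that by auto
    ultimately have "0 < Rf n y t" by linarith
    moreover have "Rf n y t \<le> max M 1" using M that by (auto simp: le_max_iff_disj)
    ultimately show ?thesis by (intro divide_left_mono) auto
  qed
  show ?thesis unfolding zeta_def
    by (rule tail_integral_strict_decreasing[OF integrable_inverse_Rf[OF n t] _ lower x]) simp
qed

lemma Pf_pos:
  assumes "n \<ge> 2" "t > 0"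
  shows "Pf n t > 0"
  using zeta_strict_decreasing[OF assms, of 0 1] by (simp add: Pf_def zeta_def)

lemma zeta_inv_zeta:
  assumes "n \<ge> 2" "t > 0" "x \<in> {0..1}"
  shows "zeta_inv n (zeta n x t) t = x"
  unfolding zeta_inv_def
proof (rule the_equality)
  fix y assume "y \<in> {0..1} \<and> zeta n y t = zeta n x t"
  then show "y = x"
    using zeta_strict_decreasing[OF assms(1,2), of x y] zeta_strict_decreasing[OF assms(1,2), of y x] assms(3)
    by (cases y x rule: linorder_cases) auto
qed (use assms in auto)

lemma zeta_image:
  assumes "n \<ge> 2" "t > 0"
  shows "(\<lambda>x. zeta n x t) ` {0..1} = {0..Pf n t}"
proof
  have "zeta n 1 t = 0" by (simp add: zeta_def)
  then show "{0..Pf n t} \<subseteq> (\<lambda>x. zeta n x t) ` {0..1}"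
    using IVT2'[of "\<lambda>x. zeta n x t" 1 _ 0] zeta_continuous_on[OF assms]
    by (force simp: Pf_def)
next
  show "(\<lambda>x. zeta n x t) ` {0..1} \<subseteq> {0..Pf n t}"
  proof clarify
    fix x :: real assume x: "x \<in> {0..1}"
    have "zeta n 1 t \<le> zeta n x t"
      using zeta_strict_decreasing[OF assms, of x 1] x by (cases "x = 1") auto
    moreover have "zeta n x t \<le> zeta n 0 t"
      using zeta_strict_decreasing[OF assms, of 0 x] x by (cases "x = 0") auto
    ultimately show "zeta n x t \<in> {0..Pf n t}" by (simp add: Pf_def zeta_def)
  qed
qed

lemma zeta_inv_mem:
  assumes "n \<ge> 2" "t > 0" "s \<in> {0..Pf n t}"
  shows "zeta_inv n s t \<in> {0..1}"
proof -
  obtain x where "x \<in> {0..1}" "s = zeta n x t" using zeta_image[OF assms(1,2)] assms(3) by blast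
  then show ?thesis using zeta_inv_zeta[OF assms(1,2)] by simp
qed

lemma zeta_inv_continuous_on:
  assumes "n \<ge> 2" "t > 0"
  shows "continuous_on {0..Pf n t} (\<lambda>s. zeta_inv n s t)"
  unfolding zeta_image[OF assms, symmetric]
  using zeta_inv_zeta[OF assms] by (intro continuous_on_inv[OF zeta_continuous_on[OF assms] compact_Icc]) auto

lemma vf_continuous_on:
  assumes n: "n \<ge> 2" and d: "d > 0" and t: "t > 0"
  shows "continuous_on {0..d} (\<lambda>z. vf n d z t)"
proof -
  have "(\<lambda>z. Pf n t * z / d) ` {0..d} \<subseteq> {0..Pf n t}"
    using Pf_pos[OF n t] d by (auto simp: field_simps)
  moreover have "continuous_on {0..d} (\<lambda>z. Pf n t * z / d)" using d by (intro continuous_intros) auto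
  ultimately have "continuous_on {0..d} (\<lambda>z. zeta_inv n (Pf n t * z / d) t)"
    by (intro continuous_on_compose2[OF zeta_inv_continuous_on[OF n t]])
  then show ?thesis unfolding vf_def by (intro continuous_intros)
qed

lemma vf_pos:
  assumes n: "n \<ge> 2" and d: "d > 0" and t: "t > 0" and z: "z \<in> {0..d}"
  shows "vf n d z t > 0"
proof -
  have "Pf n t * z / d \<in> {0..Pf n t}" using Pf_pos[OF n t] d z by (auto simp: field_simps)
  then have "1 - (1 - t) * zeta_inv n (Pf n t * z / d) t \<in> {min t 1..max t 1}"
    by (intro affine_path_between zeta_inv_mem[OF n t])
  then have "0 < 1 - (1 - t) * zeta_inv n (Pf n t * z / d) t" using t by (cases "t \<le> 1") auto
  then show ?thesis using Pf_pos[OF n t] d by (simp add: vf_def)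
qed

lemma vf_power_continuous_on:
  assumes "n \<ge> 2" "d > 0" "t > 0"
  shows "continuous_on {0..d} (\<lambda>z. vf n d z t ^ (n - 1))"
  using vf_continuous_on[OF assms] by (intro continuous_intros)

lemma integral_vf_power_pos:
  assumes "n \<ge> 2" "d > 0" "t > 0"
  shows "integral {0..d} (\<lambda>z. vf n d z t ^ (n - 1)) > 0"
proof -
  obtain z0 where z0: "z0 \<in> {0..d}" and min: "\<forall>z\<in>{0..d}. vf n d z0 t ^ (n - 1) \<le> vf n d z t ^ (n - 1)"
    using continuous_attains_inf[OF compact_Icc _ vf_power_continuous_on[OF assms]] assms(2) by force
  have "0 < d * vf n d z0 t ^ (n - 1)" using vf_pos[OF assms z0] assms(2) by simp
  also have "\<dots> = integral {0..d} (\<lambda>_. vf n d z0 t ^ (n - 1))" using assms(2) by simp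
  also have "\<dots> \<le> integral {0..d} (\<lambda>z. vf n d z t ^ (n - 1))"
    using min by (intro integral_le integrable_continuous_interval vf_power_continuous_on[OF assms]) auto
  finally show ?thesis .
qed

definition vmean :: "nat \<Rightarrow> real \<Rightarrow> real \<Rightarrow> (real \<Rightarrow> real) \<Rightarrow> real" where
  "vmean n d t u = integral {0..d} (\<lambda>y. u y * vf n d y t ^ (n - 1))
                     / integral {0..d} (\<lambda>y. vf n d y t ^ (n - 1))"

lemma Wproj_eq: "Wproj n d t u = (\<lambda>z. u z - vmean n d t u)"
  by (simp add: Wproj_def vmean_def fun_eq_iff)

lemma Xsp_iff:
  assumes "n \<ge> 2" "d > 0" "t > 0"
  shows "u \<in> Xsp n d t \<longleftrightarrow> C2_on d u \<and> vmean n d t u = 0 \<and> D1 d u 0 = 0 \<and> D1 d u d = 0"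
  using integral_vf_power_pos[OF assms] by (simp add: Xsp_def vmean_def)

lemma vmean_affine:
  assumes "n \<ge> 2" "d > 0" "t > 0" and u: "continuous_on {0..d} u"
    and g: "\<forall>z\<in>{0..d}. g z = a * u z + b"
  shows "vmean n d t g = a * vmean n d t u + b"
proof -
  define V where "V = (\<lambda>z. vf n d z t ^ (n - 1))"
  have V: "continuous_on {0..d} V" "integral {0..d} V > 0"
    using vf_power_continuous_on[OF assms(1-3)] integral_vf_power_pos[OF assms(1-3)] by (simp_all add: V_def)
  have "integral {0..d} (\<lambda>y. g y * V y) = integral {0..d} (\<lambda>y. a * (u y * V y) + b * V y)"
    using g by (intro integral_cong) (simp add: algebra_simps)
  also have "\<dots> = a * integral {0..d} (\<lambda>y. u y * V y) + b * integral {0..d} V"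
    using u V by (simp add: integral_add integrable_continuous_interval continuous_intros)
  finally show ?thesis using V by (simp add: vmean_def V_def field_simps)
qed

lemma Wproj_affine:
  assumes "n \<ge> 2" "d > 0" "t > 0" and u: "continuous_on {0..d} u"
    and g: "\<forall>z\<in>{0..d}. g z = a * u z + b"
  shows "\<forall>z\<in>{0..d}. Wproj n d t g z = a * Wproj n d t u z"
  using vmean_affine[OF assms] g by (simp add: Wproj_eq algebra_simps)

lemma Wproj_shift:
  assumes "n \<ge> 2" "d > 0" "t > 0" and u: "continuous_on {0..d} u"
  shows "Wproj n d t (\<lambda>z. u z - c) = Wproj n d t u"
  using vmean_affine[OF assms, of "\<lambda>z. u z - c" 1 "- c"] by (simp add: Wproj_eq)

lemma Wproj_Wproj:
  assumes "n \<ge> 2" "d > 0" "s > 0" "t > 0" and u: "continuous_on {0..d} u"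
  shows "Wproj n d s (Wproj n d t u) = Wproj n d s u"
  unfolding Wproj_eq[of n d t] by (rule Wproj_shift[OF assms(1-3) u])

lemma Wproj_of_Xsp:
  assumes "n \<ge> 2" "d > 0" "t > 0" "u \<in> Xsp n d t"
  shows "Wproj n d t u = u"
  using assms by (simp add: Xsp_iff Wproj_eq)

lemma continuous_on_of_Xsp:
  assumes "u \<in> Xsp n d t"
  shows "continuous_on {0..d} u"
  using assms has_vector_derivative_continuous
  unfolding Xsp_def C2_on_def continuous_on_eq_continuous_within by blast

lemma Wproj_in_Xsp:
  assumes "n \<ge> 2" "d > 0" "t > 0" "u \<in> Xsp n d s"
  shows "Wproj n d t u \<in> Xsp n d t"
proof -
  have "((\<lambda>z. u z - c) has_vector_derivative f') F \<longleftrightarrow> (u has_vector_derivative f') F" for c f' F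
    using has_vector_derivative_diff[of u f' F "\<lambda>_. c" 0] has_vector_derivative_add[of "\<lambda>z. u z - c" f' F "\<lambda>_. c" 0]
    by auto
  then have "D1 d (\<lambda>z. u z - c) = D1 d u" "C2_on d (\<lambda>z. u z - c) = C2_on d u" for c
    unfolding C2_on_def D1_def vector_derivative_def by simp_all
  moreover have "vmean n d t (Wproj n d t u) = 0"
    using vmean_affine[OF assms(1-3) continuous_on_of_Xsp[OF assms(4)], of "Wproj n d t u" 1 "- vmean n d t u"]
    by (simp add: Wproj_eq)
  moreover have "C2_on d u" "D1 d u 0 = 0" "D1 d u d = 0" using assms(4) by (simp_all add: Xsp_def)
  ultimately show ?thesis by (simp add: Xsp_iff[OF assms(1-3)] Wproj_eq)
qed

lemma Wproj_eigen_transfer: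
  assumes "n \<ge> 2" "d > 0" "s > 0" "t > 0" and x: "continuous_on {0..d} x"
    and eig: "\<forall>z\<in>{0..d}. Wproj n d s g z = lam * Wproj n d s x z"
  shows "\<forall>z\<in>{0..d}. Wproj n d t g z = lam * Wproj n d t x z"
proof -
  have "\<forall>z\<in>{0..d}. g z = lam * x z + (vmean n d s g - lam * vmean n d s x)"
    using eig by (simp add: Wproj_eq algebra_simps)
  then show ?thesis by (rule Wproj_affine[OF assms(1,2,4) x])
qed

text \<open>Here L is an arbitrary operator; it is instantiated with DH(v(\<cdot>;t)) and with
  DH(v(\<cdot>;t)) \<circ> W(t) for the two directions of the theorem.\<close>

lemma eigenvector_transfer:
  fixes L :: "(real \<Rightarrow> real) \<Rightarrow> real \<Rightarrow> real"
  assumes "n \<ge> 2" "d > 0" "s > 0" "t > 0"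
    and u: "u \<in> Xsp n d s" "\<exists>z\<in>{0..d}. u z \<noteq> 0"
    and eig: "\<forall>z\<in>{0..d}. Wproj n d s (L (Wproj n d t u)) z = lam * u z"
  shows "\<exists>w. w \<in> Xsp n d t \<and> (\<exists>z\<in>{0..d}. w z \<noteq> 0) \<and>
             (\<forall>z\<in>{0..d}. Wproj n d t (L w) z = lam * w z)"
proof (intro exI conjI)
  define w where "w = Wproj n d t u"
  show w: "w \<in> Xsp n d t" unfolding w_def by (rule Wproj_in_Xsp[OF assms(1,2,4) u(1)])
  have u_eq: "Wproj n d s w = u"
    using Wproj_Wproj[OF assms(1-4) continuous_on_of_Xsp[OF u(1)]] Wproj_of_Xsp[OF assms(1-3) u(1)]
    by (simp add: w_def)
  show "\<forall>z\<in>{0..d}. Wproj n d t (L w) z = lam * w z"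
    using Wproj_eigen_transfer[OF assms(1-4) continuous_on_of_Xsp[OF w], of "L w" lam]
      eig Wproj_of_Xsp[OF assms(1,2,4) w] u_eq
    by (simp add: w_def)
  show "\<exists>z\<in>{0..d}. w z \<noteq> 0"
  proof (rule ccontr)
    assume "\<not> (\<exists>z\<in>{0..d}. w z \<noteq> 0)"
    then have "\<forall>z\<in>{0..d}. Wproj n d s w z = 0 * Wproj n d s (\<lambda>_. 0) z"
      by (intro Wproj_affine[OF assms(1-3)]) auto
    then show False using u(2) u_eq by auto
  qed
qed

theorem lemma5p1:
  fixes n :: nat and d t lam :: real
  assumes "n \<ge> 2" and "d > 0" and "t > 0"
  shows "(\<exists>u. u \<in> Xsp n d 1 \<and> (\<exists>z\<in>{0..d}. u z \<noteq> 0) \<and>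
                (\<forall>z\<in>{0..d}. Bop n d t u z = lam * u z))
     \<longleftrightarrow> (\<exists>w. w \<in> Xsp n d t \<and> (\<exists>z\<in>{0..d}. w z \<noteq> 0) \<and>
                (\<forall>z\<in>{0..d}. Atilde n d t w z = lam * w z))"
proof
  assume "\<exists>u. u \<in> Xsp n d 1 \<and> (\<exists>z\<in>{0..d}. u z \<noteq> 0) \<and> (\<forall>z\<in>{0..d}. Bop n d t u z = lam * u z)"
  then obtain u where u: "u \<in> Xsp n d 1" "\<exists>z\<in>{0..d}. u z \<noteq> 0"
    and eig: "\<forall>z\<in>{0..d}. Wproj n d 1 (DH n d (\<lambda>z. vf n d z t) (Wproj n d t u)) z = lam * u z"
    unfolding Bop_def by blast
  from eigenvector_transfer[where L = "DH n d (\<lambda>z. vf n d z t)", OF assms(1,2) zero_less_one assms(3) u eig]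
  show "\<exists>w. w \<in> Xsp n d t \<and> (\<exists>z\<in>{0..d}. w z \<noteq> 0) \<and> (\<forall>z\<in>{0..d}. Atilde n d t w z = lam * w z)"
    unfolding Atilde_def .
next
  assume "\<exists>w. w \<in> Xsp n d t \<and> (\<exists>z\<in>{0..d}. w z \<noteq> 0) \<and> (\<forall>z\<in>{0..d}. Atilde n d t w z = lam * w z)"
  then obtain w where w: "w \<in> Xsp n d t" "\<exists>z\<in>{0..d}. w z \<noteq> 0"
    and eig: "\<forall>z\<in>{0..d}. Wproj n d t (DH n d (\<lambda>z. vf n d z t) w) z = lam * w z"
    unfolding Atilde_def by blast
  \<comment> \<open>W(t) undoes W(1) on X_t, so w is W(t) applied to the candidate u = W(1) w.\<close>
  have "Wproj n d t (Wproj n d 1 w) = w"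
    using Wproj_Wproj[OF assms(1,2,3) _ continuous_on_of_Xsp[OF w(1)]] Wproj_of_Xsp[OF assms w(1)] by simp
  then show "\<exists>u. u \<in> Xsp n d 1 \<and> (\<exists>z\<in>{0..d}. u z \<noteq> 0) \<and> (\<forall>z\<in>{0..d}. Bop n d t u z = lam * u z)"
    using eigenvector_transfer[where L = "\<lambda>f. DH n d (\<lambda>z. vf n d z t) (Wproj n d t f)",
        OF assms(1,2,3) zero_less_one w] eig
    unfolding Bop_def by auto
qed

end
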